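(* Let $p\in(1,\infty)$, let $G$ be a countable discrete group, let $E$ be a $\sigma$-finite separable $L^p$-space, let $A\subset\mathcal B(E)$ be a weak* closed subalgebra containing $I_E$, and let $\alpha$ be a weak* continuous isometric action of $G$ on $A$. Then $W^*_p(G,A,\alpha)\subset\mathcal B(\ell^p(G))\bar\otimes A$ (as subsets of $\mathcal B(\ell^p(G)\otimes_pE)$).
   Context: $\mathcal B(E)$ carries the weak* topology as dual of the nuclear operators $E'\widehat\otimes E$; $\mathcal B(\ell^p(G))\bar\otimes A$ is the weak* closure of the algebraic tensor product in $\mathcal B(\ell^p(G)\otimes_pE)$. A weak* continuous isometric action is a homomorphism from $G$ into isometric weak* continuous automorphisms of $A$. On $\ell^p(G)\otimes_pE=\ell^p(G,E)$, $(\pi(a)\xi)(s)=\alpha_{s^{-1}}(a)\xi(s)$, $(\lambda_p^E(s)\xi)(t)=\xi(s^{-1}t)$, and $W^*_p(G,A,\alpha)$ is the weak* closure of the finite sums $\sum_s\pi(a_s)\lambda_p^E(s)$. *)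

theory Defs
  imports "HOL-Analysis.Analysis" "HOL-Probability.Probability"
begin

record 'v nspace =
  carrier :: "'v set"
  vadd :: "'v \<Rightarrow> 'v \<Rightarrow> 'v"
  vsmul :: "complex \<Rightarrow> 'v \<Rightarrow> 'v"
  nrm :: "'v \<Rightarrow> real"

definition lin_on :: "'v nspace \<Rightarrow> ('v \<Rightarrow> 'v) \<Rightarrow> bool" where
  "lin_on X T \<longleftrightarrow> (\<forall>x\<in>carrier X. \<forall>y\<in>carrier X.
      T (vadd X x y) = vadd X (T x) (T y)) \<and>
   (\<forall>c. \<forall>x\<in>carrier X. T (vsmul X c x) = vsmul X c (T x))"

definition bops :: "'v nspace \<Rightarrow> ('v \<Rightarrow> 'v) set" where
  "bops X = {T. (\<forall>x\<in>carrier X. T x \<in> carrier X) \<and> lin_on X T \<and>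
      (\<exists>C. \<forall>x\<in>carrier X. nrm X (T x) \<le> C * nrm X x)}"

definition opnorm :: "'v nspace \<Rightarrow> ('v \<Rightarrow> 'v) \<Rightarrow> real" where
  "opnorm X T = Sup {nrm X (T x) |x. x \<in> carrier X \<and> nrm X x \<le> 1}"

definition dual :: "'v nspace \<Rightarrow> ('v \<Rightarrow> complex) set" where
  "dual X = {\<phi>. (\<forall>x\<in>carrier X. \<forall>y\<in>carrier X. \<phi> (vadd X x y) = \<phi> x + \<phi> y) \<and>
      (\<forall>c. \<forall>x\<in>carrier X. \<phi> (vsmul X c x) = c * \<phi> x) \<and>
      (\<exists>C. \<forall>x\<in>carrier X. norm (\<phi> x) \<le> C * nrm X x)}"

definition dnorm :: "'v nspace \<Rightarrow> ('v \<Rightarrow> complex) \<Rightarrow> real" where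
  "dnorm X \<phi> = Sup {norm (\<phi> x) |x. x \<in> carrier X \<and> nrm X x \<le> 1}"

text \<open>Functionals on B(X) given by elements \<Sum> \<phi>_n \<otimes> x_n of the projective tensor
  product X' \<otimes>^ X (nuclear operators), acting by T \<mapsto> \<Sum> \<phi>_n (T x_n).\<close>
definition nuclear_fun :: "'v nspace \<Rightarrow> (('v \<Rightarrow> 'v) \<Rightarrow> complex) \<Rightarrow> bool" where
  "nuclear_fun X \<omega> \<longleftrightarrow> (\<exists>xs \<phi>s. (\<forall>n. xs n \<in> carrier X \<and> \<phi>s n \<in> dual X) \<and>
      summable (\<lambda>n. nrm X (xs n) * dnorm X (\<phi>s n)) \<and>
      (\<forall>T. \<omega> T = (\<Sum>n. \<phi>s n (T (xs n)))))"

text \<open>The weak* topology on B(X) as the dual of the nuclear operators.\<close>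
definition weakstar :: "'v nspace \<Rightarrow> ('v \<Rightarrow> 'v) topology" where
  "weakstar X = subtopology
     (topology_generated_by {{T. \<omega> T \<in> U} |\<omega> U. nuclear_fun X \<omega> \<and> open U}) (bops X)"

text \<open>A complex scalar multiplication making the real normed space 'e a complex normed space.\<close>
definition complex_structure :: "(complex \<Rightarrow> 'e::real_normed_vector \<Rightarrow> 'e) \<Rightarrow> bool" where
  "complex_structure sc \<longleftrightarrow>
     (\<forall>r x. sc (complex_of_real r) x = r *\<^sub>R x) \<and>
     (\<forall>a b x. sc (a * b) x = sc a (sc b x)) \<and>
     (\<forall>a b x. sc (a + b) x = sc a x + sc b x) \<and>
     (\<forall>a x y. sc a (x + y) = sc a x + sc a y) \<and>
     (\<forall>a x. norm (sc a x) = cmod a * norm x)"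

definition Espace :: "(complex \<Rightarrow> 'e::real_normed_vector \<Rightarrow> 'e) \<Rightarrow> 'e nspace" where
  "Espace sc = \<lparr>carrier = UNIV, vadd = (+), vsmul = sc, nrm = norm\<rparr>"

definition lp_scalar :: "real \<Rightarrow> ('g \<Rightarrow> complex) nspace" where
  "lp_scalar p = \<lparr>carrier = {f. (\<lambda>s. norm (f s) powr p) summable_on UNIV},
     vadd = (\<lambda>f g s. f s + g s), vsmul = (\<lambda>c f s. c * f s),
     nrm = (\<lambda>f. (\<Sum>\<^sub>\<infinity>s. norm (f s) powr p) powr (1/p))\<rparr>"

text \<open>\<ell>^p(G) \<otimes>_p E = \<ell>^p(G,E)\<close>
definition lpE :: "(complex \<Rightarrow> 'e \<Rightarrow> 'e) \<Rightarrow> real \<Rightarrow> ('g \<Rightarrow> 'e::real_normed_vector) nspace" where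
  "lpE sc p = \<lparr>carrier = {\<xi>. (\<lambda>s. norm (\<xi> s) powr p) summable_on UNIV},
     vadd = (\<lambda>\<xi> \<eta> s. \<xi> s + \<eta> s), vsmul = (\<lambda>c \<xi> s. sc c (\<xi> s)),
     nrm = (\<lambda>\<xi>. (\<Sum>\<^sub>\<infinity>s. norm (\<xi> s) powr p) powr (1/p))\<rparr>"

text \<open>U is an isometric isomorphism of E onto L^p(M) (elements of L^p(M)
  being represented by functions, modulo equality M-a.e.).\<close>
definition Lp_repr :: "(complex \<Rightarrow> 'e \<Rightarrow> 'e) \<Rightarrow> real \<Rightarrow> 'm measure \<Rightarrow> ('e::real_normed_vector \<Rightarrow> 'm \<Rightarrow> complex) \<Rightarrow> bool" where
  "Lp_repr sc p M U \<longleftrightarrow>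
     (\<forall>x. U x \<in> borel_measurable M \<and> integrable M (\<lambda>\<omega>. norm (U x \<omega>) powr p) \<and>
          norm x = (integral\<^sup>L M (\<lambda>\<omega>. norm (U x \<omega>) powr p)) powr (1/p)) \<and>
     (\<forall>x y. AE \<omega> in M. U (x + y) \<omega> = U x \<omega> + U y \<omega>) \<and>
     (\<forall>c x. AE \<omega> in M. U (sc c x) \<omega> = c * U x \<omega>) \<and>
     (\<forall>f \<in> borel_measurable M. integrable M (\<lambda>\<omega>. norm (f \<omega>) powr p) \<longrightarrow>
          (\<exists>x. AE \<omega> in M. U x \<omega> = f \<omega>))"

text \<open>Algebraic tensor product B(\<ell>^p(G)) \<odot> A inside B(\<ell>^p(G,E)): operators acting
  on elementary tensors f \<otimes> e as \<Sum>_i x_i f \<otimes> a_i e.\<close>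
definition alg_tensor :: "(complex \<Rightarrow> 'e::real_normed_vector \<Rightarrow> 'e) \<Rightarrow> real \<Rightarrow> ('e::real_normed_vector \<Rightarrow> 'e) set \<Rightarrow> (('g \<Rightarrow> 'e) \<Rightarrow> ('g \<Rightarrow> 'e)) set" where
  "alg_tensor sc p A = {T \<in> bops (lpE sc p). \<exists>(n::nat) xs as.
      (\<forall>i<n. xs i \<in> bops (lp_scalar p :: ('g \<Rightarrow> complex) nspace) \<and> as i \<in> A) \<and>
      (\<forall>f\<in>carrier (lp_scalar p :: ('g \<Rightarrow> complex) nspace). \<forall>e.
          T (\<lambda>s. sc (f s) e) = (\<lambda>s. \<Sum>i<n. sc (xs i f s) (as i e)))}"

definition vN_tensor :: "(complex \<Rightarrow> 'e \<Rightarrow> 'e) \<Rightarrow> real \<Rightarrow> ('e::real_normed_vector \<Rightarrow> 'e) set \<Rightarrow> (('g \<Rightarrow> 'e) \<Rightarrow> ('g \<Rightarrow> 'e)) set" where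
  "vN_tensor sc p A = weakstar (lpE sc p) closure_of alg_tensor sc p A"

text \<open>(\<pi>(a)\<xi>)(s) = \<alpha>_{s^-1}(a)(\<xi> s) and (\<lambda>(s)\<xi>)(t) = \<xi>(s^-1 t); the group is written additively.\<close>
definition pi_rep :: "('g::group_add \<Rightarrow> ('e \<Rightarrow> 'e) \<Rightarrow> ('e \<Rightarrow> 'e)) \<Rightarrow> ('e \<Rightarrow> 'e) \<Rightarrow> ('g \<Rightarrow> 'e) \<Rightarrow> ('g \<Rightarrow> 'e)" where
  "pi_rep \<alpha> a \<xi> = (\<lambda>s. \<alpha> (- s) a (\<xi> s))"

definition lam_rep :: "'g::group_add \<Rightarrow> ('g \<Rightarrow> 'e) \<Rightarrow> ('g \<Rightarrow> 'e)" where
  "lam_rep s \<xi> = (\<lambda>t. \<xi> (- s + t))"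

definition crossed_alg :: "('g::group_add \<Rightarrow> ('e::real_normed_vector \<Rightarrow> 'e) \<Rightarrow> ('e \<Rightarrow> 'e)) \<Rightarrow> ('e \<Rightarrow> 'e) set \<Rightarrow> (('g \<Rightarrow> 'e) \<Rightarrow> ('g \<Rightarrow> 'e)) set" where
  "crossed_alg \<alpha> A = {T. \<exists>F c. finite F \<and> (\<forall>s\<in>F. c s \<in> A) \<and>
      T = (\<lambda>\<xi>. \<lambda>t. \<Sum>s\<in>F. pi_rep \<alpha> (c s) (lam_rep s \<xi>) t)}"

definition Wstar_p :: "(complex \<Rightarrow> 'e \<Rightarrow> 'e) \<Rightarrow> real \<Rightarrow> ('g::group_add \<Rightarrow> ('e::real_normed_vector \<Rightarrow> 'e) \<Rightarrow> ('e \<Rightarrow> 'e)) \<Rightarrow> ('e \<Rightarrow> 'e) set \<Rightarrow> (('g \<Rightarrow> 'e) \<Rightarrow> ('g \<Rightarrow> 'e)) set" where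
  "Wstar_p sc p \<alpha> A = weakstar (lpE sc p) closure_of crossed_alg \<alpha> A"

definition wstar_closed_unital_subalg :: "(complex \<Rightarrow> 'e \<Rightarrow> 'e) \<Rightarrow> ('e::real_normed_vector \<Rightarrow> 'e) set \<Rightarrow> bool" where
  "wstar_closed_unital_subalg sc A \<longleftrightarrow> A \<subseteq> bops (Espace sc) \<and> id \<in> A \<and>
     (\<forall>a\<in>A. \<forall>b\<in>A. (\<lambda>x. a x + b x) \<in> A \<and> a \<circ> b \<in> A) \<and>
     (\<forall>c. \<forall>a\<in>A. (\<lambda>x. sc c (a x)) \<in> A) \<and>
     closedin (weakstar (Espace sc)) A"

definition wstar_isometric_action ::
  "(complex \<Rightarrow> 'e \<Rightarrow> 'e) \<Rightarrow> ('g::group_add \<Rightarrow> ('e::real_normed_vector \<Rightarrow> 'e) \<Rightarrow> ('e \<Rightarrow> 'e)) \<Rightarrow> ('e \<Rightarrow> 'e) set \<Rightarrow> bool" where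
  "wstar_isometric_action sc \<alpha> A \<longleftrightarrow>
     (\<forall>s. bij_betw (\<alpha> s) A A \<and>
        (\<forall>a\<in>A. \<forall>b\<in>A. \<alpha> s (\<lambda>x. a x + b x) = (\<lambda>x. \<alpha> s a x + \<alpha> s b x) \<and>
                       \<alpha> s (a \<circ> b) = \<alpha> s a \<circ> \<alpha> s b) \<and>
        (\<forall>c. \<forall>a\<in>A. \<alpha> s (\<lambda>x. sc c (a x)) = (\<lambda>x. sc c (\<alpha> s a x))) \<and>
        (\<forall>a\<in>A. opnorm (Espace sc) (\<alpha> s a) = opnorm (Espace sc) a) \<and>
        continuous_map (subtopology (weakstar (Espace sc)) A) (subtopology (weakstar (Espace sc)) A) (\<alpha> s)) \<and>
     (\<forall>s t. \<forall>a\<in>A. \<alpha> (s + t) a = \<alpha> s (\<alpha> t a)) \<and>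
     (\<forall>a\<in>A. \<alpha> 0 a = a)"

end

theory Submission
  imports Defs
begin

text \<open>An element T of the algebraic crossed product is a finite sum of operators
  pi(a) lambda(s). Cutting T xi down to the coordinates in a finite set F turns each pi(a) lambda(s)
  into the finite sum over t in F of e(t, -s+t) \<otimes> alpha(-t)(a), where e(t, r) are the matrix
  units of B(l^p(G)); so the cut-down operator lies in B(l^p(G)) \<odot> A. Along the net of finite
  sets F these operators converge weak* to T: against a nuclear functional sum_n phi_n(- x_n) every
  term converges because the l^p-tail of T x_n outside F vanishes, and the terms are dominated by
  |T| |x_n| |phi_n|, so Tannery's theorem applies.\<close>

lemma complex_structure_zero:
  assumes "complex_structure sc"
  shows "sc c 0 = 0" and "sc 0 x = 0"
proof -
  have "norm (sc c 0) = 0" using assms unfolding complex_structure_def by simp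
  then show "sc c 0 = 0" by simp
  have "sc (complex_of_real 0) x = 0 *\<^sub>R x" using assms unfolding complex_structure_def by blast
  then show "sc 0 x = 0" by simp
qed

definition cutoff :: "'g set \<Rightarrow> ('g \<Rightarrow> 'a::zero) \<Rightarrow> 'g \<Rightarrow> 'a" where
  "cutoff S \<xi> = (\<lambda>t. if t \<in> S then \<xi> t else 0)"

lemma lpE_nrm_nonneg: "0 \<le> nrm (lpE sc p) \<xi>"
  by (simp add: lpE_def)

lemma norm_powr_cutoff:
  "(\<lambda>t. norm (cutoff S \<xi> t) powr p) = (\<lambda>t. if t \<in> S then norm (\<xi> t) powr p else 0)"
  by (auto simp: cutoff_def)

lemma cutoff_in_lpE:
  assumes "\<xi> \<in> carrier (lpE sc p)"
  shows "cutoff S \<xi> \<in> carrier (lpE sc p)"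
proof -
  have "(\<lambda>t. norm (\<xi> t) powr p) summable_on S"
    using assms summable_on_subset_banach by (fastforce simp: lpE_def)
  then have "(\<lambda>t. if t \<in> S then norm (\<xi> t) powr p else 0) summable_on UNIV"
    by (subst summable_on_cong_neutral[where T=S]) auto
  then show ?thesis by (simp add: lpE_def norm_powr_cutoff)
qed

lemma lpE_nrm_cutoff:
  "nrm (lpE sc p) (cutoff S \<xi>) = (\<Sum>\<^sub>\<infinity>t\<in>S. norm (\<xi> t) powr p) powr (1/p)"
proof -
  have "(\<Sum>\<^sub>\<infinity>t. if t \<in> S then norm (\<xi> t) powr p else 0) = (\<Sum>\<^sub>\<infinity>t\<in>S. norm (\<xi> t) powr p)"
    by (rule infsum_cong_neutral) auto
  then show ?thesis by (simp add: lpE_def norm_powr_cutoff)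
qed

lemma lpE_nrm_cutoff_le:
  assumes "\<xi> \<in> carrier (lpE sc p)" "0 \<le> p"
  shows "nrm (lpE sc p) (cutoff S \<xi>) \<le> nrm (lpE sc p) \<xi>"
proof -
  let ?g = "\<lambda>t. norm (\<xi> t) powr p"
  have g: "?g summable_on UNIV" using assms by (simp add: lpE_def)
  have "infsum ?g S \<le> infsum ?g UNIV"
    by (rule infsum_mono_neutral[OF summable_on_subset_banach[OF g] g]) auto
  moreover have "0 \<le> infsum ?g S" by (rule infsum_nonneg) auto
  ultimately have "infsum ?g S powr (1/p) \<le> infsum ?g UNIV powr (1/p)"
    using assms(2) by (simp add: powr_mono2)
  then show ?thesis by (simp only: lpE_nrm_cutoff) (simp add: lpE_def)
qed

lemma lpE_nrm_cutoff_Compl_tendsto_0: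
  assumes "\<xi> \<in> carrier (lpE sc p)" "0 < p"
  shows "((\<lambda>F. nrm (lpE sc p) (cutoff (-F) \<xi>)) \<longlongrightarrow> 0) (finite_subsets_at_top UNIV)"
proof -
  let ?g = "\<lambda>t. norm (\<xi> t) powr p"
  have g: "?g summable_on UNIV" using assms by (simp add: lpE_def)
  have "(sum ?g \<longlongrightarrow> infsum ?g UNIV) (finite_subsets_at_top UNIV)"
    using has_sum_infsum[OF g] by (simp add: has_sum_def)
  then have "((\<lambda>F. infsum ?g UNIV - sum ?g F) \<longlongrightarrow> infsum ?g UNIV - infsum ?g UNIV)
      (finite_subsets_at_top UNIV)"
    by (intro tendsto_intros)
  moreover have "eventually (\<lambda>F. infsum ?g (-F) = infsum ?g UNIV - sum ?g F) (finite_subsets_at_top UNIV)"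
  proof (rule eventually_finite_subsets_at_top_weakI)
    fix F :: "'a set" assume "finite F"
    have "infsum ?g (F \<union> -F) = infsum ?g F + infsum ?g (-F)"
      by (rule infsum_Un_disjoint) (use summable_on_subset_banach[OF g] in auto)
    then show "infsum ?g (-F) = infsum ?g UNIV - sum ?g F" using \<open>finite F\<close> by simp
  qed
  ultimately have "((\<lambda>F. infsum ?g (-F)) \<longlongrightarrow> 0) (finite_subsets_at_top UNIV)"
    by (simp add: tendsto_cong)
  then have "((\<lambda>F. infsum ?g (-F) powr (1/p)) \<longlongrightarrow> 0) (finite_subsets_at_top UNIV)"
    by (rule tendsto_zero_powrI[OF _ tendsto_const]) (use assms(2) in \<open>auto intro!: infsum_nonneg\<close>)
  then show ?thesis by (simp only: lpE_nrm_cutoff)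
qed

lemma lpE_vsmul:
  assumes cs: "complex_structure sc" and y: "y \<in> carrier (lpE sc p)" and p: "0 < p"
  shows "vsmul (lpE sc p) c y \<in> carrier (lpE sc p)"
    and "nrm (lpE sc p) (vsmul (lpE sc p) c y) = cmod c * nrm (lpE sc p) y"
proof -
  let ?g = "\<lambda>t. norm (y t) powr p"
  have g: "?g summable_on UNIV" using y by (simp add: lpE_def)
  have "norm (sc c x) = cmod c * norm x" for x
    using cs unfolding complex_structure_def by blast
  then have eq: "(\<lambda>t. norm (sc c (y t)) powr p) = (\<lambda>t. cmod c powr p * ?g t)"
    by (simp add: powr_mult)
  show "vsmul (lpE sc p) c y \<in> carrier (lpE sc p)"
    using summable_on_cmult_right[OF g] by (simp add: lpE_def eq)
  have "nrm (lpE sc p) (vsmul (lpE sc p) c y) = (cmod c powr p * infsum ?g UNIV) powr (1/p)"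
    by (simp add: lpE_def eq infsum_cmult_right')
  also have "\<dots> = (cmod c powr p) powr (1/p) * infsum ?g UNIV powr (1/p)"
    using infsum_nonneg[of UNIV ?g] by (simp add: powr_mult)
  also have "\<dots> = cmod c * nrm (lpE sc p) y"
    using p by (simp add: powr_powr lpE_def)
  finally show "nrm (lpE sc p) (vsmul (lpE sc p) c y) = cmod c * nrm (lpE sc p) y" .
qed

lemma dual_lpE_bdd_above:
  assumes "\<phi> \<in> dual (lpE sc p)"
  shows "bdd_above {norm (\<phi> x) |x. x \<in> carrier (lpE sc p) \<and> nrm (lpE sc p) x \<le> 1}"
proof -
  obtain C where C: "\<And>x. x \<in> carrier (lpE sc p) \<Longrightarrow> norm (\<phi> x) \<le> C * nrm (lpE sc p) x"
    using assms unfolding dual_def by blast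
  have "norm (\<phi> x) \<le> max C 0" if "x \<in> carrier (lpE sc p)" "nrm (lpE sc p) x \<le> 1" for x
  proof -
    have "C * nrm (lpE sc p) x \<le> max C 0 * 1"
      using that(2) lpE_nrm_nonneg[of sc p x] by (intro mult_mono) auto
    then show ?thesis using C[OF that(1)] by linarith
  qed
  then show ?thesis by (intro bdd_aboveI[where M="max C 0"]) blast
qed

lemma dnorm_lpE_nonneg:
  assumes "\<phi> \<in> dual (lpE sc p)"
  shows "0 \<le> dnorm (lpE sc p) \<phi>"
proof -
  have "norm (\<phi> (\<lambda>_. 0)) \<le> dnorm (lpE sc p) \<phi>"
    unfolding dnorm_def
    by (rule cSup_upper[OF _ dual_lpE_bdd_above[OF assms]]) (auto simp: lpE_def)
  then show ?thesis using norm_ge_zero order_trans by blast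
qed

lemma dual_lpE_norm_le:
  assumes cs: "complex_structure sc" and y: "y \<in> carrier (lpE sc p)" and p: "0 < p"
    and \<phi>: "\<phi> \<in> dual (lpE sc p)"
  shows "norm (\<phi> y) \<le> dnorm (lpE sc p) \<phi> * nrm (lpE sc p) y"
proof (cases "nrm (lpE sc p) y = 0")
  case True
  obtain C where "\<And>x. x \<in> carrier (lpE sc p) \<Longrightarrow> norm (\<phi> x) \<le> C * nrm (lpE sc p) x"
    using \<phi> unfolding dual_def by blast
  then show ?thesis using True y by fastforce
next
  case False
  let ?n = "nrm (lpE sc p) y"
  have pos: "0 < ?n" using False lpE_nrm_nonneg[of sc p y] by simp
  define z where "z = vsmul (lpE sc p) (complex_of_real (1 / ?n)) y"
  have "z \<in> carrier (lpE sc p)" "nrm (lpE sc p) z = 1"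
    unfolding z_def using lpE_vsmul[OF cs y p] pos by (auto simp: norm_divide)
  then have "norm (\<phi> z) \<le> dnorm (lpE sc p) \<phi>"
    unfolding dnorm_def by (intro cSup_upper[OF _ dual_lpE_bdd_above[OF \<phi>]]) auto
  moreover have "\<phi> z = complex_of_real (1 / ?n) * \<phi> y"
    using \<phi> y unfolding z_def dual_def by blast
  ultimately have "norm (\<phi> y) / ?n \<le> dnorm (lpE sc p) \<phi>"
    using pos by (simp add: norm_mult norm_divide)
  then show ?thesis using pos by (simp add: divide_simps mult.commute)
qed

lemma dual_lpE_cutoff_tendsto:
  assumes cs: "complex_structure sc" and p: "0 < p"
    and \<phi>: "\<phi> \<in> dual (lpE sc p)" and y: "y \<in> carrier (lpE sc p)"
  shows "((\<lambda>F. \<phi> (cutoff F y)) \<longlongrightarrow> \<phi> y) (finite_subsets_at_top UNIV)"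
proof -
  have add: "\<phi> (vadd (lpE sc p) a b) = \<phi> a + \<phi> b"
    if "a \<in> carrier (lpE sc p)" "b \<in> carrier (lpE sc p)" for a b
    using \<phi> that unfolding dual_def by blast
  have split: "\<phi> y - \<phi> (cutoff (-F) y) = \<phi> (cutoff F y)" for F
  proof -
    have "y = vadd (lpE sc p) (cutoff F y) (cutoff (-F) y)"
      by (simp add: lpE_def cutoff_def fun_eq_iff)
    then have "\<phi> y = \<phi> (vadd (lpE sc p) (cutoff F y) (cutoff (-F) y))"
      by (rule arg_cong)
    also have "\<dots> = \<phi> (cutoff F y) + \<phi> (cutoff (-F) y)"
      by (intro add cutoff_in_lpE[OF y])
    finally show ?thesis by simp
  qed
  have "((\<lambda>F. dnorm (lpE sc p) \<phi> * nrm (lpE sc p) (cutoff (-F) y)) \<longlongrightarrow> dnorm (lpE sc p) \<phi> * 0)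
      (finite_subsets_at_top UNIV)"
    by (intro tendsto_intros lpE_nrm_cutoff_Compl_tendsto_0[OF y p])
  then have "((\<lambda>F. dnorm (lpE sc p) \<phi> * nrm (lpE sc p) (cutoff (-F) y)) \<longlongrightarrow> 0)
      (finite_subsets_at_top UNIV)"
    by simp
  then have "((\<lambda>F. \<phi> (cutoff (-F) y)) \<longlongrightarrow> 0) (finite_subsets_at_top UNIV)"
    by (rule Lim_null_comparison[rotated])
       (intro always_eventually allI dual_lpE_norm_le[OF cs _ p \<phi>] cutoff_in_lpE[OF y])
  then have "((\<lambda>F. \<phi> y - \<phi> (cutoff (-F) y)) \<longlongrightarrow> \<phi> y - 0) (finite_subsets_at_top UNIV)"
    by (intro tendsto_intros)
  then show ?thesis by (simp add: split)
qed

lemma cutoff_comp_bops: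
  assumes T: "T \<in> bops (lpE sc p)" and p: "0 \<le> p" and cs: "complex_structure sc"
  shows "cutoff F \<circ> T \<in> bops (lpE sc p)"
proof -
  obtain C where C: "\<And>x. x \<in> carrier (lpE sc p) \<Longrightarrow> nrm (lpE sc p) (T x) \<le> C * nrm (lpE sc p) x"
    using T unfolding bops_def by blast
  have Tx: "x \<in> carrier (lpE sc p) \<Longrightarrow> T x \<in> carrier (lpE sc p)" for x
    using T by (simp add: bops_def)
  have "lin_on (lpE sc p) (cutoff F \<circ> T)"
    using T cs unfolding bops_def lin_on_def
    by (auto simp: lpE_def cutoff_def complex_structure_zero fun_eq_iff)
  moreover have "nrm (lpE sc p) ((cutoff F \<circ> T) x) \<le> C * nrm (lpE sc p) x"
    if "x \<in> carrier (lpE sc p)" for x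
    using order_trans[OF lpE_nrm_cutoff_le[OF Tx[OF that] p] C[OF that]] by simp
  ultimately show ?thesis unfolding bops_def using cutoff_in_lpE[OF Tx] by auto
qed

lemma nuclear_fun_cutoff_comp_tendsto:
  assumes T: "T \<in> bops (lpE sc p)" and p: "0 < p" and cs: "complex_structure sc"
    and \<omega>: "nuclear_fun (lpE sc p) \<omega>"
  shows "((\<lambda>F. \<omega> (cutoff F \<circ> T)) \<longlongrightarrow> \<omega> T) (finite_subsets_at_top UNIV)"
proof -
  let ?X = "lpE sc p"
  obtain xs \<phi>s where xs: "\<And>n. xs n \<in> carrier ?X" and \<phi>s: "\<And>n. \<phi>s n \<in> dual ?X"
    and summable: "summable (\<lambda>n. nrm ?X (xs n) * dnorm ?X (\<phi>s n))"
    and \<omega>_eq: "\<And>T. \<omega> T = (\<Sum>n. \<phi>s n (T (xs n)))"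
    using \<omega> unfolding nuclear_fun_def by blast
  have Tx: "T (xs k) \<in> carrier ?X" for k
    using T xs by (simp add: bops_def)
  obtain C where C: "\<And>x. x \<in> carrier ?X \<Longrightarrow> nrm ?X (T x) \<le> C * nrm ?X x"
    using T unfolding bops_def by blast
  have bound: "norm (\<phi>s k (cutoff F (T (xs k)))) \<le> C * (nrm ?X (xs k) * dnorm ?X (\<phi>s k))"
    for k F
  proof -
    have "norm (\<phi>s k (cutoff F (T (xs k)))) \<le> dnorm ?X (\<phi>s k) * nrm ?X (cutoff F (T (xs k)))"
      by (rule dual_lpE_norm_le[OF cs cutoff_in_lpE[OF Tx] p \<phi>s])
    also have "\<dots> \<le> dnorm ?X (\<phi>s k) * nrm ?X (T (xs k))"
      using lpE_nrm_cutoff_le[OF Tx] p dnorm_lpE_nonneg[OF \<phi>s] by (simp add: mult_left_mono)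
    also have "\<dots> \<le> dnorm ?X (\<phi>s k) * (C * nrm ?X (xs k))"
      using C[OF xs] dnorm_lpE_nonneg[OF \<phi>s] by (rule mult_left_mono)
    finally show ?thesis by (simp add: algebra_simps)
  qed
  have lim: "((\<lambda>F. \<phi>s k (cutoff F (T (xs k)))) \<longlongrightarrow> \<phi>s k (T (xs k))) (finite_subsets_at_top UNIV)"
    for k
    by (rule dual_lpE_cutoff_tendsto[OF cs p \<phi>s Tx])
  have "((\<lambda>F. \<Sum>k. \<phi>s k (cutoff F (T (xs k)))) \<longlongrightarrow> (\<Sum>k. \<phi>s k (T (xs k))))
      (finite_subsets_at_top UNIV)"
    using tannerys_theorem[where a="\<lambda>k F. \<phi>s k (cutoff F (T (xs k)))"
        and b="\<lambda>k. \<phi>s k (T (xs k))" and M="\<lambda>k. C * (nrm ?X (xs k) * dnorm ?X (\<phi>s k))"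
        and F="finite_subsets_at_top UNIV", OF lim]
      bound summable_mult[OF summable] finite_subsets_at_top_neq_bot
    by (auto intro!: always_eventually)
  then show ?thesis by (simp add: \<omega>_eq)
qed

lemma nuclear_fun_lpE_zero: "nuclear_fun (lpE sc p :: ('g \<Rightarrow> 'e::real_normed_vector) nspace) (\<lambda>_. 0)"
proof -
  let ?X = "lpE sc p :: ('g \<Rightarrow> 'e) nspace"
  have "(\<lambda>_. 0) \<in> carrier ?X" "nrm ?X (\<lambda>_. 0) = 0"
    by (simp_all add: lpE_def)
  moreover have "(\<lambda>_. 0) \<in> dual ?X"
    unfolding dual_def by (auto intro!: exI[where x=0])
  ultimately show ?thesis
    unfolding nuclear_fun_def by (intro exI[where x="\<lambda>_. \<lambda>_. 0"]) simp
qed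

lemma UNIV_in_weakstar_subbasis:
  "UNIV \<in> {{T. \<omega> T \<in> U} |\<omega> U. nuclear_fun (lpE sc p :: ('g \<Rightarrow> 'e::real_normed_vector) nspace) \<omega> \<and> open U}"
  using nuclear_fun_lpE_zero open_UNIV by blast

lemma topspace_weakstar_lpE:
  "topspace (weakstar (lpE sc p :: ('g \<Rightarrow> 'e::real_normed_vector) nspace)) = bops (lpE sc p)"
  using UNIV_in_weakstar_subbasis[of sc p] unfolding weakstar_def by auto

lemma limitin_weakstar_lpE:
  fixes f :: "'a \<Rightarrow> ('g \<Rightarrow> 'e::real_normed_vector) \<Rightarrow> 'g \<Rightarrow> 'e"
  assumes conv: "\<And>\<omega>. nuclear_fun (lpE sc p) \<omega> \<Longrightarrow> ((\<lambda>x. \<omega> (f x)) \<longlongrightarrow> \<omega> l) F"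
    and l: "l \<in> bops (lpE sc p)" and f: "\<And>x. f x \<in> bops (lpE sc p)"
  shows "limitin (weakstar (lpE sc p)) f l F"
proof -
  let ?S = "{{T. \<omega> T \<in> U} |\<omega> U. nuclear_fun (lpE sc p :: ('g \<Rightarrow> 'e) nspace) \<omega> \<and> open U}"
  have "eventually (\<lambda>x. f x \<in> W) F" if "generate_topology_on ?S W" "l \<in> W" for W
    using that
  proof (induction rule: generate_topology_on.induct)
    case (Int a b)
    then show ?case by (auto intro: eventually_conj)
  next
    case (UN K)
    then obtain k where "k \<in> K" "l \<in> k" by blast
    with UN.IH have "eventually (\<lambda>x. f x \<in> k) F" by blast
    then show ?case by eventually_elim (use \<open>k \<in> K\<close> in blast)
  next
    case (Basis s)
    then obtain \<omega> U where s: "s = {T. \<omega> T \<in> U}" "nuclear_fun (lpE sc p) \<omega>" "open U" by blast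
    then show ?case using topological_tendstoD[OF conv[OF s(2)] s(3)] Basis by simp
  qed simp
  moreover have "topspace (topology_generated_by ?S) = UNIV"
    using UNIV_in_weakstar_subbasis[of sc p] by auto
  ultimately have "limitin (topology_generated_by ?S) f l F"
    unfolding limitin_def by (simp add: openin_topology_generated_by_iff)
  then show ?thesis unfolding weakstar_def limitin_subtopology using l f by simp
qed

lemma limitin_weakstar_cutoff_comp:
  assumes "T \<in> bops (lpE sc p)" "0 < p" "complex_structure sc"
  shows "limitin (weakstar (lpE sc p)) (\<lambda>F. cutoff F \<circ> T) T (finite_subsets_at_top UNIV)"
  using assms by (intro limitin_weakstar_lpE nuclear_fun_cutoff_comp_tendsto cutoff_comp_bops) auto

lemma limitin_in_closure_of:
  assumes "limitin X f l F" "eventually (\<lambda>x. f x \<in> S) F" "F \<noteq> bot"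
  shows "l \<in> X closure_of S"
  unfolding in_closure_of
proof (intro conjI allI impI)
  show "l \<in> topspace X" using assms(1) by (simp add: limitin_def)
  fix W assume "l \<in> W \<and> openin X W"
  then have "eventually (\<lambda>x. f x \<in> S \<and> f x \<in> W) F"
    using assms(1,2) unfolding limitin_def by (auto intro: eventually_conj)
  then show "\<exists>y. y \<in> S \<and> y \<in> W"
    using eventually_happens'[OF assms(3)] by blast
qed

definition matrix_unit :: "'g \<Rightarrow> 'g \<Rightarrow> ('g \<Rightarrow> 'a::zero) \<Rightarrow> 'g \<Rightarrow> 'a" where
  "matrix_unit t r f = (\<lambda>u. if u = t then f r else 0)"

lemma matrix_unit_bops:
  fixes t r :: 'g
  assumes p: "0 \<le> p"
  shows "matrix_unit t r \<in> bops (lp_scalar p :: ('g \<Rightarrow> complex) nspace)"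
proof -
  have eq: "(\<lambda>u. norm (matrix_unit t r f u) powr p) = (\<lambda>u. if u \<in> {t} then norm (f r) powr p else 0)"
    for f :: "'g \<Rightarrow> complex"
    by (auto simp: matrix_unit_def)
  have infsum_eq: "(\<Sum>\<^sub>\<infinity>u. norm (matrix_unit t r f u) powr p) = norm (f r) powr p"
    for f :: "'g \<Rightarrow> complex"
    unfolding eq by (subst infsum_cong_neutral[where T="{t}" and g="\<lambda>_. norm (f r) powr p"]) auto
  have "matrix_unit t r f \<in> carrier (lp_scalar p)" for f :: "'g \<Rightarrow> complex"
  proof -
    have "(\<lambda>u. norm (matrix_unit t r f u) powr p) summable_on UNIV"
      unfolding eq by (subst summable_on_cong_neutral[where T="{t}" and g="\<lambda>_. norm (f r) powr p"]) auto
    then show ?thesis by (simp add: lp_scalar_def)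
  qed
  moreover have "nrm (lp_scalar p) (matrix_unit t r f) \<le> 1 * nrm (lp_scalar p) f"
    if f: "f \<in> carrier (lp_scalar p)" for f :: "'g \<Rightarrow> complex"
  proof -
    let ?g = "\<lambda>u. norm (f u) powr p"
    have "?g summable_on UNIV" using f by (simp add: lp_scalar_def)
    then have "infsum ?g {r} \<le> infsum ?g UNIV"
      by (intro infsum_mono_neutral) auto
    then have "infsum ?g {r} powr (1/p) \<le> infsum ?g UNIV powr (1/p)"
      using p by (intro powr_mono2) auto
    then show ?thesis by (simp add: lp_scalar_def infsum_eq)
  qed
  moreover have "lin_on (lp_scalar p) (matrix_unit t r)"
    unfolding lin_on_def by (simp add: lp_scalar_def matrix_unit_def fun_eq_iff)
  ultimately show ?thesis
    unfolding bops_def by (intro CollectI conjI exI[where x=1]) auto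
qed

lemma alg_tensorI:
  fixes T :: "('g \<Rightarrow> 'e::real_normed_vector) \<Rightarrow> 'g \<Rightarrow> 'e"
    and xs :: "'i \<Rightarrow> ('g \<Rightarrow> complex) \<Rightarrow> 'g \<Rightarrow> complex"
  assumes T: "T \<in> bops (lpE sc p)" and I: "finite I"
    and xs: "\<And>i. i \<in> I \<Longrightarrow> xs i \<in> bops (lp_scalar p)"
    and as: "\<And>i. i \<in> I \<Longrightarrow> as i \<in> A"
    and elementary: "\<And>f e. f \<in> carrier (lp_scalar p) \<Longrightarrow>
      T (\<lambda>s. sc (f s) e) = (\<lambda>s. \<Sum>i\<in>I. sc (xs i f s) (as i e))"
  shows "T \<in> alg_tensor sc p A"
proof -
  obtain h where h: "bij_betw h {..<card I} I"
    using ex_bij_betw_nat_finite[OF I] by (auto simp: atLeast0LessThan)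
  then have "(\<Sum>i<card I. sc ((xs \<circ> h) i f s) ((as \<circ> h) i e)) = (\<Sum>i\<in>I. sc (xs i f s) (as i e))"
    for f s e
    unfolding comp_def by (rule sum.reindex_bij_betw)
  then have "\<forall>f\<in>carrier (lp_scalar p). \<forall>e.
      T (\<lambda>s. sc (f s) e) = (\<lambda>s. \<Sum>i<card I. sc ((xs \<circ> h) i f s) ((as \<circ> h) i e))"
    using elementary by simp
  moreover have "\<forall>i<card I. (xs \<circ> h) i \<in> bops (lp_scalar p) \<and> (as \<circ> h) i \<in> A"
    using h xs as by (auto simp: bij_betw_def)
  ultimately show ?thesis
    unfolding alg_tensor_def using T by blast
qed

lemma cutoff_comp_crossed_alg_in_alg_tensor:
  assumes cs: "complex_structure sc" and p: "0 \<le> p" and A: "A \<subseteq> bops (Espace sc)"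
    and \<alpha>A: "\<And>s a. a \<in> A \<Longrightarrow> \<alpha> s a \<in> A"
    and T: "T \<in> crossed_alg \<alpha> A" "T \<in> bops (lpE sc p)" and F: "finite F"
  shows "cutoff F \<circ> T \<in> alg_tensor sc p A"
proof -
  obtain S c where S: "finite S" "\<And>s. s \<in> S \<Longrightarrow> c s \<in> A"
    and T_eq: "T = (\<lambda>\<xi> t. \<Sum>s\<in>S. pi_rep \<alpha> (c s) (lam_rep s \<xi>) t)"
    using T(1) unfolding crossed_alg_def by blast
  have linear: "a (sc z x) = sc z (a x)" if "a \<in> A" for a z x
    using A that unfolding bops_def lin_on_def Espace_def by auto
  have "(cutoff F \<circ> T) (\<lambda>s. sc (f s) e)
      = (\<lambda>u. \<Sum>(t, s)\<in>F \<times> S. sc (matrix_unit t (-s + t) f u) (\<alpha> (-t) (c s) e))" for f e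
  proof
    fix u
    let ?H = "\<Sum>s\<in>S. sc (f (-s + u)) (\<alpha> (-u) (c s) e)"
    have "(\<Sum>(t, s)\<in>F \<times> S. sc (matrix_unit t (-s + t) f u) (\<alpha> (-t) (c s) e))
        = (\<Sum>t\<in>F. if u = t then ?H else 0)"
      unfolding sum.cartesian_product[symmetric] matrix_unit_def
      by (rule sum.cong) (auto simp: complex_structure_zero[OF cs])
    also have "\<dots> = (cutoff F \<circ> T) (\<lambda>s. sc (f s) e) u"
      using F linear \<alpha>A S(2)
      by (simp add: T_eq cutoff_def pi_rep_def lam_rep_def)
    finally show "(cutoff F \<circ> T) (\<lambda>s. sc (f s) e) u
        = (\<Sum>(t, s)\<in>F \<times> S. sc (matrix_unit t (-s + t) f u) (\<alpha> (-t) (c s) e))" ..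
  qed
  then show ?thesis
    using F S \<alpha>A
    by (intro alg_tensorI[where I="F \<times> S" and xs="\<lambda>(t, s). matrix_unit t (-s + t)"
          and as="\<lambda>(t, s). \<alpha> (-t) (c s)"] cutoff_comp_bops[OF T(2) p cs])
       (auto simp: matrix_unit_bops[OF p] case_prod_beta)
qed

lemma crossed_alg_subset_closure_alg_tensor:
  assumes cs: "complex_structure sc" and p: "0 < p" and A: "A \<subseteq> bops (Espace sc)"
    and \<alpha>A: "\<And>s a. a \<in> A \<Longrightarrow> \<alpha> s a \<in> A"
  shows "bops (lpE sc p) \<inter> crossed_alg \<alpha> A \<subseteq> weakstar (lpE sc p) closure_of alg_tensor sc p A"
proof
  fix T assume T: "T \<in> bops (lpE sc p) \<inter> crossed_alg \<alpha> A"
  show "T \<in> weakstar (lpE sc p) closure_of alg_tensor sc p A"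
  proof (rule limitin_in_closure_of)
    show "limitin (weakstar (lpE sc p)) (\<lambda>F. cutoff F \<circ> T) T (finite_subsets_at_top UNIV)"
      using T p cs by (intro limitin_weakstar_cutoff_comp) auto
    show "eventually (\<lambda>F. cutoff F \<circ> T \<in> alg_tensor sc p A) (finite_subsets_at_top UNIV)"
      using T p by (intro eventually_finite_subsets_at_top_weakI
          cutoff_comp_crossed_alg_in_alg_tensor[OF cs _ A \<alpha>A]) auto
  qed simp
qed

theorem mainTheorem10:
  fixes p :: real
    and M :: "'m measure"
    and sc :: "complex \<Rightarrow> 'e::real_normed_vector \<Rightarrow> 'e"
    and A :: "('e \<Rightarrow> 'e) set"
    and \<alpha> :: "'g::{group_add,countable} \<Rightarrow> ('e \<Rightarrow> 'e) \<Rightarrow> ('e \<Rightarrow> 'e)"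
  assumes "1 < p"
    and "complex_structure sc"
    and "sigma_finite_measure M"
    and "\<exists>U. Lp_repr sc p M U"
    and "\<exists>D::'e set. countable D \<and> closure D = UNIV"
    and "wstar_closed_unital_subalg sc A"
    and "wstar_isometric_action sc \<alpha> A"
  shows "Wstar_p sc p \<alpha> A \<subseteq> vN_tensor sc p A"
proof -
  let ?W = "weakstar (lpE sc p) :: (('g \<Rightarrow> 'e) \<Rightarrow> 'g \<Rightarrow> 'e) topology"
  have A: "A \<subseteq> bops (Espace sc)"
    using assms(6) unfolding wstar_closed_unital_subalg_def by blast
  have \<alpha>A: "\<And>s a. a \<in> A \<Longrightarrow> \<alpha> s a \<in> A"
    using assms(7) unfolding wstar_isometric_action_def bij_betw_def by blast
  have "topspace ?W \<inter> crossed_alg \<alpha> A \<subseteq> ?W closure_of alg_tensor sc p A"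
    using crossed_alg_subset_closure_alg_tensor[where \<alpha>=\<alpha>, OF assms(2) _ A \<alpha>A] assms(1)
    by (simp add: topspace_weakstar_lpE)
  then have "?W closure_of (topspace ?W \<inter> crossed_alg \<alpha> A) \<subseteq> ?W closure_of alg_tensor sc p A"
    by (rule closure_of_minimal) simp
  then show ?thesis
    unfolding Wstar_p_def vN_tensor_def by (simp only: closure_of_restrict[symmetric])
qed

end
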